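(* For every positive integer $m$ there is no homomorphism $\mathrm{KG}(6,2)\to S_m$.
   Context: $\mathrm{KG}(6,2)$ is the Kneser graph whose vertices are the $2$-element subsets of $\{1,\dots,6\}$, two being adjacent iff disjoint. The symmetric shift graph $S_m$ has vertex set $\{(i,j):1\le i,j\le m,\ i\ne j\}$, and $(i,j)$ is adjacent to $(k,\ell)$ iff $j=k$ or $i=\ell$. A homomorphism is an edge-preserving map between vertex sets. *)

theory Defs
  imports Main
begin

definition graph_hom ::
  "'a set \<Rightarrow> ('a \<Rightarrow> 'a \<Rightarrow> bool) \<Rightarrow> 'b set \<Rightarrow> ('b \<Rightarrow> 'b \<Rightarrow> bool) \<Rightarrow> ('a \<Rightarrow> 'b) \<Rightarrow> bool" where
  "graph_hom V1 E1 V2 E2 f \<longleftrightarrow>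
     (\<forall>v\<in>V1. f v \<in> V2) \<and> (\<forall>u\<in>V1. \<forall>v\<in>V1. E1 u v \<longrightarrow> E2 (f u) (f v))"

definition kneser_vertices :: "nat \<Rightarrow> nat \<Rightarrow> nat set set" where
  "kneser_vertices n k = {A. A \<subseteq> {1..n} \<and> card A = k}"

definition kneser_adj :: "nat set \<Rightarrow> nat set \<Rightarrow> bool" where
  "kneser_adj A B \<longleftrightarrow> A \<inter> B = {}"

definition shift_vertices :: "nat \<Rightarrow> (nat \<times> nat) set" where
  "shift_vertices m = {(i, j). i \<in> {1..m} \<and> j \<in> {1..m} \<and> i \<noteq> j}"

definition shift_adj :: "nat \<times> nat \<Rightarrow> nat \<times> nat \<Rightarrow> bool" where
  "shift_adj p q \<longleftrightarrow> snd p = fst q \<or> fst p = snd q"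

end

theory Submission
  imports Defs
begin

text \<open>
  A homomorphism \<open>f\<close> into \<open>S\<^sub>m\<close> turns every vertex into an arc \<open>(tail, head)\<close>, and every
  triangle of \<open>KG(6,2)\<close>, i.e. every perfect matching of \<open>{1..6}\<close>, into a directed 3-cycle.
  So of the two other pairs of a perfect matching through \<open>ab\<close>, one is an out-neighbour of
  \<open>ab\<close> (its tail is the head \<open>q\<close> of \<open>f ab\<close>) and the other an in-neighbour; choosing one pair
  from each of the three matchings, the out-neighbours or the in-neighbours form a star
  \<open>cd, ce, cg\<close>. Reversing all arcs if necessary, \<open>cd, ce, cg\<close> are out-neighbours.
  Two of them, say \<open>cd\<close> and \<open>cg\<close>, cannot have a common head \<open>r\<close>: the only common neighbour
  of the arcs \<open>(q, r)\<close> and \<open>(r, p)\<close> is \<open>(p, q) = f ab\<close>, which would force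
  \<open>f ad = f bg = f ab\<close> although \<open>ad\<close> and \<open>bg\<close> are adjacent. With distinct heads, \<open>ag\<close>
  (adjacent to \<open>cd\<close> and \<open>ce\<close>) and \<open>be\<close> (adjacent to \<open>cd\<close> and \<open>cg\<close>) must both have head
  \<open>q\<close>; but arcs with a common head are never adjacent in \<open>S\<^sub>m\<close>.
\<close>

lemma shift_adj_swap: "shift_adj (prod.swap x) (prod.swap y) \<longleftrightarrow> shift_adj x y"
  by (auto simp: shift_adj_def)

lemma shift_adj_same_snd:
  assumes "snd x = snd y" "fst x \<noteq> snd x" "fst y \<noteq> snd y"
  shows "\<not> shift_adj x y"
  using assms by (auto simp: shift_adj_def)

lemma shift_adj_same_fst_imp_snd:
  assumes "shift_adj z x" "shift_adj z y" "fst x = fst y" "snd x \<noteq> snd y"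
  shows "snd z = fst x"
  using assms by (auto simp: shift_adj_def)

lemma shift_adj_path_imp_eq:
  assumes "shift_adj z (q, r)" "shift_adj z (r, p)" "fst z \<noteq> snd z" "q \<noteq> r" "r \<noteq> p"
  shows "z = (p, q)"
  using assms by (cases z) (auto simp: shift_adj_def)

lemma shift_triangle:
  assumes "shift_adj x z" "shift_adj y z" "snd x = fst y"
    and "fst x \<noteq> snd x" "fst y \<noteq> snd y" "fst z \<noteq> snd z"
  shows "z = (snd y, fst x)"
  using assms by (cases z) (auto simp: shift_adj_def)

lemma pair_in_kneser_vertices:
  "a \<in> {1..n} \<Longrightarrow> b \<in> {1..n} \<Longrightarrow> a \<noteq> b \<Longrightarrow> {a, b} \<in> kneser_vertices n 2"
  by (simp add: kneser_vertices_def)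

locale kneser62_shift_hom =
  fixes m :: nat and f :: "nat set \<Rightarrow> nat \<times> nat"
  assumes hom: "graph_hom (kneser_vertices 6 2) kneser_adj (shift_vertices m) shift_adj f"
begin

lemma reversed: "kneser62_shift_hom m (prod.swap \<circ> f)"
  using hom by unfold_locales (auto simp: graph_hom_def shift_vertices_def shift_adj_swap)

lemma arc:
  assumes "a \<in> {1..6}" "b \<in> {1..6}" "a \<noteq> b"
  shows "fst (f {a, b}) \<noteq> snd (f {a, b})"
proof -
  have "f {a, b} \<in> shift_vertices m"
    using hom pair_in_kneser_vertices[OF assms] by (simp add: graph_hom_def)
  then show ?thesis
    by (auto simp: shift_vertices_def)
qed

lemma adj:
  assumes "{a, b, c, d} \<subseteq> {1..6}" "distinct [a, b, c, d]"
  shows "shift_adj (f {a, b}) (f {c, d})"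
  using hom pair_in_kneser_vertices[of a 6 b] pair_in_kneser_vertices[of c 6 d] assms
  by (auto simp: graph_hom_def kneser_adj_def)

lemma matching_orientation:
  assumes elems: "distinct [a, b, c, d, e, g]" "set [a, b, c, d, e, g] \<subseteq> {1..6}"
  shows "fst (f {c, d}) = snd (f {a, b}) \<and> snd (f {e, g}) = fst (f {a, b})
    \<or> fst (f {e, g}) = snd (f {a, b}) \<and> snd (f {c, d}) = fst (f {a, b})"
proof -
  have arcs: "fst (f {a, b}) \<noteq> snd (f {a, b})" "fst (f {c, d}) \<noteq> snd (f {c, d})"
    "fst (f {e, g}) \<noteq> snd (f {e, g})"
    by (rule arc; use elems in auto)+
  have adjs: "shift_adj (f {a, b}) (f {c, d})" "shift_adj (f {a, b}) (f {e, g})"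
    "shift_adj (f {c, d}) (f {e, g})"
    by (rule adj; use elems in auto)+
  show ?thesis
  proof (cases "snd (f {a, b}) = fst (f {c, d})")
    case True
    then have "f {e, g} = (snd (f {c, d}), fst (f {a, b}))"
      using adjs arcs by (intro shift_triangle) auto
    with True show ?thesis by simp
  next
    case False
    with adjs have "snd (f {c, d}) = fst (f {a, b})"
      by (auto simp: shift_adj_def)
    then have "f {e, g} = (snd (f {a, b}), fst (f {c, d}))"
      using adjs arcs by (intro shift_triangle) (auto simp: shift_adj_def)
    with \<open>snd (f {c, d}) = fst (f {a, b})\<close> show ?thesis by simp
  qed
qed

lemma out_neighbours_heads_differ:
  assumes elems: "distinct [a, b, c, d, e, g]" "set [a, b, c, d, e, g] \<subseteq> {1..6}"
    and out_d: "fst (f {c, d}) = snd (f {a, b})"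
    and out_g: "fst (f {c, g}) = snd (f {a, b})"
  shows "snd (f {c, d}) \<noteq> snd (f {c, g})"
proof
  assume same_head: "snd (f {c, d}) = snd (f {c, g})"
  define p q r where "p = fst (f {a, b})" and "q = snd (f {a, b})" and "r = snd (f {c, d})"
  have arc_ab: "p \<noteq> q"
    unfolding p_def q_def by (rule arc; use elems in auto)
  have arc_cd: "q \<noteq> r"
    unfolding q_def r_def out_d[symmetric] by (rule arc; use elems in auto)
  have cd: "f {c, d} = (q, r)" and cg: "f {c, g} = (q, r)"
    using out_d out_g same_head by (auto simp: q_def r_def prod_eq_iff)
  have eg: "f {e, g} = (r, p)"
    unfolding p_def r_def
    by (rule shift_triangle[OF adj adj]; use elems out_d in \<open>auto simp: arc\<close>)
  have arc_eg: "r \<noteq> p"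
    using arc[of e g] elems by (simp add: eg)
  have de: "f {d, e} = (r, p)"
    unfolding p_def r_def same_head
    by (rule shift_triangle[OF adj adj]; use elems out_g in \<open>auto simp: arc insert_commute\<close>)
  have "f {b, g} = (p, q)"
    using adj[of b g c d] adj[of b g d e] arc[of b g] elems
    by (intro shift_adj_path_imp_eq[where r = r]) (auto simp: cd de arc_cd arc_eg)
  moreover have "f {a, d} = (p, q)"
    using adj[of a d c g] adj[of a d e g] arc[of a d] elems
    by (intro shift_adj_path_imp_eq[where r = r]) (auto simp: cg eg arc_cd arc_eg)
  moreover have "shift_adj (f {a, d}) (f {b, g})"
    by (rule adj; use elems in auto)
  ultimately show False
    using arc_ab by (simp add: shift_adj_def)
qed

lemma no_out_star:
  assumes elems: "distinct [a, b, c, d, e, g]" "set [a, b, c, d, e, g] \<subseteq> {1..6}"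
    and out: "fst (f {c, d}) = snd (f {a, b})" "fst (f {c, e}) = snd (f {a, b})"
      "fst (f {c, g}) = snd (f {a, b})"
  shows False
proof -
  have heads_de: "snd (f {c, d}) \<noteq> snd (f {c, e})"
    by (rule out_neighbours_heads_differ[of a b c d g e]; use elems out in auto)
  have heads_dg: "snd (f {c, d}) \<noteq> snd (f {c, g})"
    by (rule out_neighbours_heads_differ[of a b c d e g]; use elems out in auto)
  have "snd (f {a, g}) = fst (f {c, d})"
    using adj[of a g c d] adj[of a g c e] elems out heads_de
    by (intro shift_adj_same_fst_imp_snd[of _ _ "f {c, e}"]) auto
  moreover have "snd (f {b, e}) = fst (f {c, d})"
    using adj[of b e c d] adj[of b e c g] elems out heads_dg
    by (intro shift_adj_same_fst_imp_snd[of _ _ "f {c, g}"]) auto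
  moreover have "shift_adj (f {a, g}) (f {b, e})"
    by (rule adj; use elems in auto)
  ultimately show False
    using elems arc[of a g] arc[of b e] shift_adj_same_snd by auto
qed

lemma no_in_star:
  assumes elems: "distinct [a, b, c, d, e, g]" "set [a, b, c, d, e, g] \<subseteq> {1..6}"
    and "snd (f {c, d}) = fst (f {a, b})" "snd (f {c, e}) = fst (f {a, b})"
      "snd (f {c, g}) = fst (f {a, b})"
  shows False
proof -
  interpret reversed: kneser62_shift_hom m "prod.swap \<circ> f"
    by (fact reversed)
  show False
    using reversed.no_out_star[OF elems] assms by simp
qed

lemma absurd: False
proof -
  have "fst (f {c, d}) = snd (f {1, 2}) \<and> snd (f {e, g}) = fst (f {1, 2})
    \<or> fst (f {e, g}) = snd (f {1, 2}) \<and> snd (f {c, d}) = fst (f {1, 2})"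
    if "distinct [c, d, e, g]" "{c, d, e, g} = {3, 4, 5, 6}" for c d e g
    using that by (intro matching_orientation) auto
  from this[of 3 4 5 6] this[of 3 5 4 6] this[of 3 6 4 5] show False
    using no_out_star[of 1 2 3 4 5 6] no_out_star[of 1 2 4 3 5 6]
      no_out_star[of 1 2 5 3 4 6] no_out_star[of 1 2 6 3 4 5]
      no_in_star[of 1 2 3 4 5 6] no_in_star[of 1 2 4 3 5 6]
      no_in_star[of 1 2 5 3 4 6] no_in_star[of 1 2 6 3 4 5]
    by (auto simp: insert_commute)
qed

end

theorem mainTheorem5:
  fixes m :: nat
  assumes "m \<ge> 1"
  shows "\<not> (\<exists>f. graph_hom (kneser_vertices 6 2) kneser_adj (shift_vertices m) shift_adj f)"
  using kneser62_shift_hom.absurd unfolding kneser62_shift_hom_def by blast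

end
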